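(* Let $k\geq 3$ and let $n$ be such that $\frac{n}{k-1}$ is an integer at least $3$. Then $\rho(\mathcal{F}_1)<\rho(\mathcal{F})$.
   Context: Hypergraphs are simple, undirected, $k$-uniform (every edge has exactly $k$ vertices). The adjacency matrix has $(\mathcal{A}_{\mathcal{G}})_{ij}=\sum_{e\in E,\ i,j\in e}\frac{1}{|e|-1}$ for $i\neq j$ and zero diagonal, and $\rho(\mathcal{G})$ is its spectral radius. Let $\mathbb{C}$ be the $k$-uniform 2-hypercycle consisting of two edges $e_1,e_2$ with $e_1\cap e_2=\{v_1,v_2\}$, i.e. $e_i=\{v_1,v_{a(i,1)},\dots,v_{a(i,k-2)},v_2\}$ ($i=1,2$), all listed vertices distinct. Attaching a pendant edge at a vertex $v$ means adding a new edge consisting of $v$ and $k-1$ new vertices. $\mathcal{F}$ is the hypergraph of order $n$ obtained from $\mathbb{C}$ by attaching $\frac{n}{k-1}-3$ pendant edges at $v_1$ and one pendant edge at $v_2$. $\mathcal{F}_1$ is the hypergraph of order $n$ obtained from $\mathbb{C}$ by attaching $\frac{n}{k-1}-2$ pendant edges at a vertex $\eta\in e_2\setminus\{v_1,v_2\}$. *)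

theory Defs
  imports Complex_Main
begin

text \<open>A hypergraph is given by its edge set; its vertex set is the union of its edges
(the hypergraphs considered here have no isolated vertices).\<close>

definition hverts :: "'a set set \<Rightarrow> 'a set" where
  "hverts E = \<Union>E"

definition hadj :: "'a set set \<Rightarrow> 'a \<Rightarrow> 'a \<Rightarrow> real" where
  "hadj E i j = (if i = j then 0
     else (\<Sum>e\<in>{e\<in>E. i \<in> e \<and> j \<in> e}. 1 / (real (card e) - 1)))"

definition heigenvalue :: "'a set set \<Rightarrow> complex \<Rightarrow> bool" where
  "heigenvalue E mu \<longleftrightarrow> (\<exists>x :: 'a \<Rightarrow> complex. (\<exists>i\<in>hverts E. x i \<noteq> 0) \<and>
      (\<forall>i\<in>hverts E. (\<Sum>j\<in>hverts E. complex_of_real (hadj E i j) * x j) = mu * x i))"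

definition hspec_rad :: "'a set set \<Rightarrow> real" where
  "hspec_rad E = Sup {cmod mu | mu. heigenvalue E mu}"

text \<open>Vertices are pairs of naturals. v1 = (0,0), v2 = (0,1).
 The 2-hypercycle C has edges e_i = {v1, v2} \<union> {(i,j) | 1 \<le> j \<le> k-2}, i = 1,2.
 A pendant edge with index i \<ge> 3 at vertex v is {v} \<union> {(i,j) | 1 \<le> j \<le> k-1}.\<close>

definition core_edge :: "nat \<Rightarrow> nat \<Rightarrow> (nat \<times> nat) set" where
  "core_edge k i = {(0,0), (0,1)} \<union> {(i, j) | j. 1 \<le> j \<and> j \<le> k - 2}"

definition pendant_edge :: "nat \<Rightarrow> nat \<times> nat \<Rightarrow> nat \<Rightarrow> (nat \<times> nat) set" where
  "pendant_edge k v i = insert v {(i, j) | j. 1 \<le> j \<and> j \<le> k - 1}"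

definition hypercycle2 :: "nat \<Rightarrow> (nat \<times> nat) set set" where
  "hypercycle2 k = {core_edge k 1, core_edge k 2}"

definition hyperF :: "nat \<Rightarrow> nat \<Rightarrow> (nat \<times> nat) set set" where
  "hyperF k n = (let m = n div (k - 1) in
     hypercycle2 k \<union> pendant_edge k (0,0) ` {3..<m} \<union> {pendant_edge k (0,1) m})"

definition hyperF1 :: "nat \<Rightarrow> nat \<Rightarrow> (nat \<times> nat) set set" where
  "hyperF1 k n = (let m = n div (k - 1) in
     hypercycle2 k \<union> pendant_edge k (2,1) ` {3..m})"

end

theory Submission
  imports Defs
begin

(*
  Write d = k - 1 and m = n / (k - 1). Both hypergraphs are invariant under permutations
  inside their vertex classes, so it suffices to work with vectors constant on the classes.

  For F, eliminating the pendant and inner classes from the eigen-equations of d A_F leaves a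
  2x2 system whose determinant char_F vanishes, by the intermediate value theorem, at some
  A >= 5/2 (d = 2) resp. A >= 27/10 (d >= 3); then s/d with s = A + d - 1 is an eigenvalue of
  A_F, hence s/d <= rho(F).

  For F1 we build a positive vector y with d A_F1 y < s y entrywise, so rho(F1) < s/d by the
  Collatz-Wielandt bound. Such a y exists as soon as a few polynomials in A and d are positive,
  and on the region where the root lies they have nonnegative coefficients after a shift.
*)

section \<open>Spectral bounds for uniform hypergraphs\<close>

definition huniform :: "nat \<Rightarrow> 'a set set \<Rightarrow> bool" where
  "huniform k E \<longleftrightarrow> finite E \<and> (\<forall>e\<in>E. finite e \<and> card e = k)"

lemma finite_hverts: "huniform k E \<Longrightarrow> finite (hverts E)"
  by (auto simp: huniform_def hverts_def)

lemma hadj_commute: "hadj E i j = hadj E j i"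
  unfolding hadj_def by (auto intro: sum.cong)

lemma hadj_nonneg: "huniform k E \<Longrightarrow> 2 \<le> k \<Longrightarrow> 0 \<le> hadj E i j"
  unfolding hadj_def huniform_def by (auto intro!: sum_nonneg)

lemma hadj_row_sum_uniform:
  fixes x :: "'a \<Rightarrow> real"
  assumes "huniform k E"
  shows "(\<Sum>j\<in>hverts E. hadj E i j * x j)
           = (\<Sum>e\<in>E. if i \<in> e then (\<Sum>j\<in>e. x j) - x i else 0) / (real k - 1)"
proof -
  have finE: "finite E" and fin_e: "\<And>e. e \<in> E \<Longrightarrow> finite e"
    and card_e: "\<And>e. e \<in> E \<Longrightarrow> card e = k"
    using assms by (auto simp: huniform_def)
  have hadj_eq: "hadj E i j = (\<Sum>e\<in>E. if i \<in> e \<and> j \<in> e - {i} then 1 else 0) / (real k - 1)" for j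
    unfolding hadj_def using card_e
    by (auto simp: sum.inter_filter[OF finE, symmetric] sum_divide_distrib intro!: sum.cong)
  have "hadj E i j * x j = (\<Sum>e\<in>E. if i \<in> e \<and> j \<in> e - {i} then x j else 0) / (real k - 1)" for j
    unfolding hadj_eq by (simp add: sum_distrib_right if_distrib[of "\<lambda>c. c * x j"] cong: if_cong)
  then have "(\<Sum>j\<in>hverts E. hadj E i j * x j)
      = (\<Sum>e\<in>E. \<Sum>j\<in>hverts E. if i \<in> e \<and> j \<in> e - {i} then x j else 0) / (real k - 1)"
    by (simp add: sum_divide_distrib[symmetric] sum.swap[of _ E])
  also have "\<dots> = (\<Sum>e\<in>E. if i \<in> e then (\<Sum>j\<in>e. x j) - x i else 0) / (real k - 1)"
  proof (intro arg_cong2[where f = "(/)"] sum.cong refl)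
    fix e assume e: "e \<in> E"
    then have sub: "e - {i} \<subseteq> hverts E" by (auto simp: hverts_def)
    have "(\<Sum>j\<in>hverts E. if j \<in> e - {i} then x j else 0) = (\<Sum>j\<in>e - {i}. x j)"
      unfolding sum.inter_restrict[OF finite_hverts[OF assms], symmetric] Int_absorb1[OF sub] ..
    then show "(\<Sum>j\<in>hverts E. if i \<in> e \<and> j \<in> e - {i} then x j else 0)
             = (if i \<in> e then (\<Sum>j\<in>e. x j) - x i else 0)"
      using fin_e[OF e] by (simp add: sum_diff1)
  qed
  finally show ?thesis .
qed

lemma heigenvalue_of_real_eigenvector:
  fixes x :: "'a \<Rightarrow> real"
  assumes "i0 \<in> hverts E" and "x i0 \<noteq> 0"
    and "\<And>i. i \<in> hverts E \<Longrightarrow> (\<Sum>j\<in>hverts E. hadj E i j * x j) = r * x i"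
  shows "heigenvalue E (complex_of_real r)"
  unfolding heigenvalue_def
proof (intro exI[of _ "\<lambda>j. complex_of_real (x j)"] conjI ballI)
  show "\<exists>i\<in>hverts E. complex_of_real (x i) \<noteq> 0" using assms(1,2) by auto
  fix i assume "i \<in> hverts E"
  then show "(\<Sum>j\<in>hverts E. complex_of_real (hadj E i j) * complex_of_real (x j))
      = complex_of_real r * complex_of_real (x i)"
    using assms(3) by (simp flip: of_real_mult of_real_sum)
qed

lemma cmod_eigenvalue_le_supersolution:
  assumes "huniform k E" and "2 \<le> k" and "heigenvalue E \<mu>"
    and pos: "\<And>i. i \<in> hverts E \<Longrightarrow> 0 < y i"
    and super: "\<And>i. i \<in> hverts E \<Longrightarrow> (\<Sum>j\<in>hverts E. hadj E i j * y j) \<le> B * y i"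
  shows "cmod \<mu> \<le> B"
proof -
  let ?V = "hverts E"
  obtain x where nz: "\<exists>i\<in>?V. x i \<noteq> 0"
    and eq: "\<And>i. i \<in> ?V \<Longrightarrow> (\<Sum>j\<in>?V. complex_of_real (hadj E i j) * x j) = \<mu> * x i"
    using assms(3) unfolding heigenvalue_def by blast
  have fin: "finite ?V" using finite_hverts[OF assms(1)] .
  have nonneg: "0 \<le> hadj E i j" for i j using hadj_nonneg[OF assms(1,2)] .
  \<comment> \<open>Compare at a vertex maximising the ratio |x i| / y i.\<close>
  define q where "q i = cmod (x i) / y i" for i
  have "Max (q ` ?V) \<in> q ` ?V" using fin nz by (intro Max_in) auto
  then obtain i0 where i0: "i0 \<in> ?V" and q_i0: "q i0 = Max (q ` ?V)" by auto
  have max: "q i \<le> q i0" if "i \<in> ?V" for i unfolding q_i0 using fin that by simp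
  obtain i1 where i1: "i1 \<in> ?V" "x i1 \<noteq> 0" using nz by blast
  have "0 < q i1" using i1 pos by (simp add: q_def)
  then have q0: "0 < q i0" using max[OF i1(1)] by linarith
  have bound: "cmod (x j) \<le> q i0 * y j" if "j \<in> ?V" for j
    using max[OF that] pos[OF that] by (simp add: q_def field_simps)
  have "cmod \<mu> * cmod (x i0) = cmod (\<Sum>j\<in>?V. complex_of_real (hadj E i0 j) * x j)"
    using eq[OF i0] by (simp add: norm_mult)
  also have "\<dots> \<le> (\<Sum>j\<in>?V. hadj E i0 j * cmod (x j))"
    by (rule order_trans[OF norm_sum]) (simp add: norm_mult nonneg)
  also have "\<dots> \<le> (\<Sum>j\<in>?V. hadj E i0 j * (q i0 * y j))"
    using bound nonneg by (intro sum_mono mult_left_mono) auto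
  also have "\<dots> = q i0 * (\<Sum>j\<in>?V. hadj E i0 j * y j)"
    by (simp add: sum_distrib_left algebra_simps)
  also have "\<dots> \<le> q i0 * (B * y i0)"
    using super[OF i0] q0 by (intro mult_left_mono) auto
  also have "\<dots> = B * cmod (x i0)"
    using pos[OF i0] by (simp add: q_def)
  finally have "cmod \<mu> * cmod (x i0) \<le> B * cmod (x i0)" .
  moreover have "0 < cmod (x i0)" using q0 pos[OF i0] by (simp add: q_def zero_less_divide_iff)
  ultimately show ?thesis by simp
qed

text \<open>Two vertices lying in exactly the same edges carry the eigenvector x a = 1, x b = -1.\<close>

lemma heigenvalue_twin_vertices:
  assumes fin: "finite (hverts E)" and a: "a \<in> hverts E" and b: "b \<in> hverts E" and "a \<noteq> b"
    and twins: "\<And>e. e \<in> E \<Longrightarrow> a \<in> e \<longleftrightarrow> b \<in> e"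
  shows "heigenvalue E (- complex_of_real (hadj E a b))"
  unfolding heigenvalue_def
proof (intro exI conjI ballI)
  let ?V = "hverts E"
  define x :: "_ \<Rightarrow> complex" where "x j = (if j = a then 1 else if j = b then -1 else 0)" for j
  show "\<exists>i\<in>?V. x i \<noteq> 0" using a by (auto simp: x_def)
  fix i assume i: "i \<in> ?V"
  have "(\<Sum>j\<in>?V. complex_of_real (hadj E i j) * x j)
      = (\<Sum>j\<in>?V. (if j = a then complex_of_real (hadj E i a) else 0)
                   - (if j = b then complex_of_real (hadj E i b) else 0))"
    using \<open>a \<noteq> b\<close> by (intro sum.cong) (auto simp: x_def)
  also have "\<dots> = complex_of_real (hadj E i a) - complex_of_real (hadj E i b)"
    using fin a b by (simp add: sum_subtractf)
  also have "\<dots> = - complex_of_real (hadj E a b) * x i"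
  proof (cases "i = a \<or> i = b")
    case True
    then show ?thesis
      using \<open>a \<noteq> b\<close> hadj_commute[of E a b] by (auto simp: x_def hadj_def)
  next
    case False
    have "{e \<in> E. i \<in> e \<and> a \<in> e} = {e \<in> E. i \<in> e \<and> b \<in> e}" using twins by auto
    then have "hadj E i a = hadj E i b" using False by (simp add: hadj_def)
    then show ?thesis using False by (simp add: x_def)
  qed
  finally show "(\<Sum>j\<in>?V. complex_of_real (hadj E i j) * x j) = - complex_of_real (hadj E a b) * x i" .
qed

lemma cmod_eigenvalue_le_hspec_rad:
  assumes "huniform k E" and "2 \<le> k" and "heigenvalue E \<mu>"
  shows "cmod \<mu> \<le> hspec_rad E"
proof -
  let ?V = "hverts E"
  define B where "B = (\<Sum>i\<in>?V. \<Sum>j\<in>?V. hadj E i j)"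
  have "cmod \<nu> \<le> B" if "heigenvalue E \<nu>" for \<nu>
  proof (rule cmod_eigenvalue_le_supersolution[OF assms(1,2) that, where y = "\<lambda>_. 1"])
    fix i assume "i \<in> ?V"
    then show "(\<Sum>j\<in>?V. hadj E i j * 1) \<le> B * 1"
      unfolding B_def using finite_hverts[OF assms(1)] hadj_nonneg[OF assms(1,2)]
      by (auto intro!: member_le_sum sum_nonneg)
  qed simp
  then have "bdd_above {cmod \<nu> | \<nu>. heigenvalue E \<nu>}" by (intro bdd_aboveI[where M = B]) blast
  then show ?thesis unfolding hspec_rad_def using assms(3) by (auto intro: cSup_upper)
qed

lemma hspec_rad_less_strict_supersolution:
  assumes "huniform k E" and "2 \<le> k" and "heigenvalue E \<mu>"
    and pos: "\<And>i. i \<in> hverts E \<Longrightarrow> 0 < y i"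
    and super: "\<And>i. i \<in> hverts E \<Longrightarrow> (\<Sum>j\<in>hverts E. hadj E i j * y j) < r * y i"
  shows "hspec_rad E < r"
proof -
  let ?V = "hverts E"
  define ratio where "ratio i = (\<Sum>j\<in>?V. hadj E i j * y j) / y i" for i
  define B where "B = Max (ratio ` ?V)"
  have fin: "finite ?V" using finite_hverts[OF assms(1)] .
  have ne: "?V \<noteq> {}" using assms(3) by (auto simp: heigenvalue_def)
  have "B < r" unfolding B_def using fin ne super pos by (auto simp: ratio_def divide_less_eq)
  have "cmod \<nu> \<le> B" if "heigenvalue E \<nu>" for \<nu>
  proof (rule cmod_eigenvalue_le_supersolution[OF assms(1,2) that pos])
    fix i assume i: "i \<in> ?V"
    then have "ratio i \<le> B" unfolding B_def using fin by simp
    then show "(\<Sum>j\<in>?V. hadj E i j * y j) \<le> B * y i" using pos[OF i] by (simp add: ratio_def divide_le_eq)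
  qed
  then have "hspec_rad E \<le> B" unfolding hspec_rad_def using assms(3) by (auto intro!: cSup_least)
  with \<open>B < r\<close> show ?thesis by simp
qed

section \<open>Core and pendant edges\<close>

lemma sum_insert_separated:
  assumes "finite S" and "w \<in> A" and "\<forall>B\<in>S. w \<notin> B"
  shows "sum g (insert A S) = g A + sum g S"
  using assms by (subst sum.insert) auto

lemma mem_core_edge:
  "(a, b) \<in> core_edge k l \<longleftrightarrow> (a = 0 \<and> b = 0) \<or> (a = 0 \<and> b = 1) \<or> (a = l \<and> 1 \<le> b \<and> b \<le> k - 2)"
  by (auto simp: core_edge_def)

lemma mem_pendant_edge:
  "(a, b) \<in> pendant_edge k v l \<longleftrightarrow> (a, b) = v \<or> (a = l \<and> 1 \<le> b \<and> b \<le> k - 1)"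
  by (auto simp: pendant_edge_def)

lemma core_edge_eq: "l \<noteq> 0 \<Longrightarrow> core_edge k l = {(0,0), (0,1)} \<union> Pair l ` {1..k-2}"
  by (auto simp: core_edge_def)

lemma pendant_edge_eq: "pendant_edge k v l = insert v (Pair l ` {1..k-1})"
  by (auto simp: pendant_edge_def)

lemma finite_core_edge: "finite (core_edge k l)"
  by (auto simp: core_edge_def)

lemma finite_pendant_edge: "finite (pendant_edge k v l)"
  by (simp add: pendant_edge_eq)

lemma card_core_edge:
  assumes "l \<noteq> 0" and "3 \<le> k"
  shows "card (core_edge k l) = k"
proof -
  have "card (Pair l ` {1..k-2}) = k - 2" by (simp add: card_image inj_on_def)
  then show ?thesis using assms by (auto simp: core_edge_eq card_insert_if)
qed

lemma card_pendant_edge: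
  assumes "fst v \<noteq> l" and "2 \<le> k"
  shows "card (pendant_edge k v l) = k"
proof -
  have "card (Pair l ` {1..k-1}) = k - 1" by (simp add: card_image inj_on_def)
  then show ?thesis using assms by (auto simp: pendant_edge_eq card_insert_if)
qed

lemma sum_core_edge:
  assumes "l \<noteq> 0"
  shows "(\<Sum>v\<in>core_edge k l. x v) = x (0,0) + x (0,1) + (\<Sum>b=1..k-2. x (l, b))"
proof -
  have "(\<Sum>v\<in>Pair l ` {1..k-2}. x v) = (\<Sum>b=1..k-2. x (l, b))" by (simp add: sum.reindex inj_on_def)
  moreover have "(0,0) \<notin> insert (0,1) (Pair l ` {1..k-2})" "(0,1) \<notin> Pair l ` {1..k-2}"
    using assms by auto
  ultimately show ?thesis using assms by (simp add: core_edge_eq add.assoc)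
qed

lemma sum_pendant_edge:
  assumes "fst v \<noteq> l"
  shows "(\<Sum>u\<in>pendant_edge k v l. x u) = x v + (\<Sum>b=1..k-1. x (l, b))"
proof -
  have "(\<Sum>u\<in>Pair l ` {1..k-1}. x u) = (\<Sum>b=1..k-1. x (l, b))" by (simp add: sum.reindex inj_on_def)
  moreover have "v \<notin> Pair l ` {1..k-1}" using assms by auto
  ultimately show ?thesis by (simp add: pendant_edge_eq)
qed

lemma inj_on_pendant_edge:
  assumes "2 \<le> k" and "\<forall>l\<in>L. l \<noteq> fst v"
  shows "inj_on (pendant_edge k v) L"
proof (rule inj_onI)
  fix l l' assume "l \<in> L" and "pendant_edge k v l = pendant_edge k v l'"
  moreover have "(l, 1) \<in> pendant_edge k v l" using assms(1) by (auto simp: mem_pendant_edge)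
  ultimately show "l = l'" using assms(2) by (auto simp: mem_pendant_edge)
qed

lemma sum_pendant_edges_containing:
  assumes "finite L"
  shows "(\<Sum>l\<in>L. if (a, b) \<in> pendant_edge k v l then f l else 0)
       = (if (a, b) = v then (\<Sum>l\<in>L. f l) else if a \<in> L \<and> 1 \<le> b \<and> b \<le> k - 1 then f a else 0)"
proof (cases "(a, b) = v")
  case False
  then have "(\<Sum>l\<in>L. if (a, b) \<in> pendant_edge k v l then f l else 0)
      = (\<Sum>l\<in>L. if l = a then (if 1 \<le> b \<and> b \<le> k - 1 then f l else 0) else 0)"
    by (intro sum.cong) (auto simp: mem_pendant_edge)
  with False assms show ?thesis by (simp add: sum.delta')
qed (auto simp: mem_pendant_edge)

section \<open>An eigenvector of F\<close>

lemma hyperF_eq: "hyperF k n = insert (core_edge k 1) (insert (core_edge k 2)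
   (insert (pendant_edge k (0,1) (n div (k-1))) (pendant_edge k (0,0) ` {3..<n div (k-1)})))"
  unfolding hyperF_def hypercycle2_def Let_def by auto

lemma huniform_hyperF: "3 \<le> k \<Longrightarrow> 3 \<le> n div (k-1) \<Longrightarrow> huniform k (hyperF k n)"
  unfolding huniform_def hyperF_eq
  by (auto simp: finite_core_edge finite_pendant_edge card_core_edge card_pendant_edge)

lemma sum_hyperF:
  assumes "3 \<le> k" and m: "m = n div (k-1)" and "3 \<le> m"
  shows "(\<Sum>e\<in>hyperF k n. g e) = g (core_edge k 1) + g (core_edge k 2) + g (pendant_edge k (0,1) m)
          + (\<Sum>l=3..<m. g (pendant_edge k (0,0) l))"
proof -
  let ?P = "pendant_edge k (0,0) ` {3..<m}"
  have "(\<Sum>e\<in>?P. g e) = (\<Sum>l=3..<m. g (pendant_edge k (0,0) l))"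
    using \<open>3 \<le> k\<close> by (intro sum.reindex_cong[OF inj_on_pendant_edge]) auto
  moreover have "(\<Sum>e\<in>insert (pendant_edge k (0,1) m) ?P. g e) = g (pendant_edge k (0,1) m) + (\<Sum>e\<in>?P. g e)"
    by (rule sum_insert_separated[where w = "(0,1)"]) (auto simp: mem_pendant_edge)
  moreover have "(\<Sum>e\<in>insert (core_edge k 2) (insert (pendant_edge k (0,1) m) ?P). g e)
      = g (core_edge k 2) + (\<Sum>e\<in>insert (pendant_edge k (0,1) m) ?P. g e)"
    using assms by (intro sum_insert_separated[where w = "(2,1)"]) (auto simp: mem_core_edge mem_pendant_edge)
  moreover have "(\<Sum>e\<in>hyperF k n. g e)
      = g (core_edge k 1) + (\<Sum>e\<in>insert (core_edge k 2) (insert (pendant_edge k (0,1) m) ?P). g e)"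
    unfolding hyperF_eq m[symmetric] using assms
    by (intro sum_insert_separated[where w = "(1,1)"]) (auto simp: mem_core_edge mem_pendant_edge)
  ultimately show ?thesis by (simp add: add.assoc)
qed

lemma hverts_hyperF_cases:
  assumes "(a, b) \<in> hverts (hyperF k n)" and "m = n div (k-1)"
  obtains "a = 0" "b = 0" | "a = 0" "b = 1" | "a = 1 \<or> a = 2" "1 \<le> b" "b \<le> k-2"
    | "3 \<le> a" "a < m" "1 \<le> b" "b \<le> k-1" | "a = m" "1 \<le> b" "b \<le> k-1"
  using assms unfolding hverts_def hyperF_eq by (auto simp: mem_core_edge mem_pendant_edge)

text \<open>Vectors on F constant on the vertex classes v1, v2, inner vertices of e1 and e2,
  pendant vertices at v1 and pendant vertices at v2, and the eigen-equations of (k-1) A_F for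
  them; here d = k - 1 and t = m - 2, so that v1 carries t - 1 pendant edges.\<close>

definition F_vector ::
    "nat \<Rightarrow> real \<Rightarrow> real \<Rightarrow> real \<Rightarrow> real \<Rightarrow> real \<Rightarrow> nat \<times> nat \<Rightarrow> real" where
  "F_vector m x1 x2 xc xp xq v =
     (if v = (0,0) then x1 else if v = (0,1) then x2 else if fst v \<le> 2 then xc
      else if fst v < m then xp else xq)"

definition F_class_equations ::
    "real \<Rightarrow> real \<Rightarrow> real \<Rightarrow> real \<Rightarrow> real \<Rightarrow> real \<Rightarrow> real \<Rightarrow> real \<Rightarrow> bool" where
  "F_class_equations d t s x1 x2 xc xp xq \<longleftrightarrow>
     s*x1 = 2*x2 + 2*(d-1)*xc + (t-1)*d*xp \<and>
     s*x2 = 2*x1 + 2*(d-1)*xc + d*xq \<and>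
     s*xc = x1 + x2 + (d-2)*xc \<and>
     s*xp = x1 + (d-1)*xp \<and>
     s*xq = x2 + (d-1)*xq"

lemma hyperF_neighbour_sum:
  assumes "3 \<le> k" and m: "m = n div (k-1)" "3 \<le> m"
    and eqs: "F_class_equations (real k - 1) (real m - 2) s x1 x2 xc xp xq"
    and i: "(a, b) \<in> hverts (hyperF k n)"
  defines "x \<equiv> F_vector m x1 x2 xc xp xq"
  shows "(\<Sum>e\<in>hyperF k n. if (a, b) \<in> e then (\<Sum>j\<in>e. x j) - x (a, b) else 0) = s * x (a, b)"
proof -
  define d where "d = real k - 1"
  have core: "(\<Sum>j\<in>core_edge k l. x j) = x1 + x2 + (d-1)*xc" if "l = 1 \<or> l = 2" for l
    using that \<open>3 \<le> k\<close> by (auto simp: sum_core_edge x_def F_vector_def d_def)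
  have pend_v1: "(\<Sum>j\<in>pendant_edge k (0,0) l. x j) = x1 + d*xp" if "3 \<le> l" "l < m" for l
    using that \<open>3 \<le> k\<close> by (auto simp: sum_pendant_edge x_def F_vector_def d_def)
  have pend_v2: "(\<Sum>j\<in>pendant_edge k (0,1) m. x j) = x2 + d*xq"
    using m \<open>3 \<le> k\<close> by (auto simp: sum_pendant_edge x_def F_vector_def d_def)
  define t where "t = real m - 2"
  have eq: "s*x1 = 2*x2 + 2*(d-1)*xc + (t-1)*d*xp" "s*x2 = 2*x1 + 2*(d-1)*xc + d*xq"
    "s*xc = x1 + x2 + (d-2)*xc" "s*xp = x1 + (d-1)*xp" "s*xq = x2 + (d-1)*xq"
    using eqs by (simp_all add: F_class_equations_def d_def t_def)
  note edges = sum_hyperF[OF \<open>3 \<le> k\<close> m] sum_pendant_edges_containing[OF finite_atLeastLessThan]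
  from hverts_hyperF_cases[OF i m(1)] show ?thesis
  proof cases
    case 1
    then have "x (a, b) = x1" by (simp add: x_def F_vector_def)
    with 1 show ?thesis using m(2)
      by (simp add: edges core pend_v1 mem_core_edge mem_pendant_edge eq t_def algebra_simps)
  next
    case 2
    then have "x (a, b) = x2" by (simp add: x_def F_vector_def)
    with 2 show ?thesis using pend_v2
      by (simp add: edges core mem_core_edge mem_pendant_edge eq algebra_simps)
  next
    case 3
    then have "x (a, b) = xc" by (auto simp add: x_def F_vector_def)
    with 3 show ?thesis using m(2)
      by (auto simp add: edges core mem_core_edge mem_pendant_edge eq algebra_simps)
  next
    case 4
    then have "x (a, b) = xp" by (simp add: x_def F_vector_def)
    with 4 show ?thesis
      by (simp add: edges pend_v1 mem_core_edge mem_pendant_edge eq algebra_simps)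
  next
    case 5
    then have "x (a, b) = xq" using m(2) by (simp add: x_def F_vector_def)
    with 5 show ?thesis using m(2) pend_v2
      by (simp add: edges mem_core_edge mem_pendant_edge eq algebra_simps)
  qed
qed

lemma hyperF_heigenvalue:
  assumes "3 \<le> k" and m: "m = n div (k-1)" "3 \<le> m"
    and eqs: "F_class_equations (real k - 1) (real m - 2) s x1 x2 xc xp xq" and "x1 \<noteq> 0"
  shows "heigenvalue (hyperF k n) (complex_of_real (s / (real k - 1)))"
proof (rule heigenvalue_of_real_eigenvector)
  let ?x = "F_vector m x1 x2 xc xp xq"
  show "(0,0) \<in> hverts (hyperF k n)" by (auto simp: hverts_def hyperF_eq mem_core_edge)
  show "?x (0,0) \<noteq> 0" using \<open>x1 \<noteq> 0\<close> by (simp add: F_vector_def)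
  fix i assume "i \<in> hverts (hyperF k n)"
  moreover obtain a b where "i = (a, b)" by fastforce
  moreover have "real k - 1 \<noteq> 0" using \<open>3 \<le> k\<close> by simp
  moreover have "huniform k (hyperF k n)" using huniform_hyperF \<open>3 \<le> k\<close> m by simp
  ultimately show "(\<Sum>j\<in>hverts (hyperF k n). hadj (hyperF k n) i j * ?x j) = s / (real k - 1) * ?x i"
    using hyperF_neighbour_sum[OF assms(1-4)] by (simp add: hadj_row_sum_uniform)
qed

section \<open>A strict supersolution on F1\<close>

lemma hyperF1_eq: "hyperF1 k n = insert (core_edge k 1) (insert (core_edge k 2)
   (pendant_edge k (2,1) ` {3..n div (k-1)}))"
  unfolding hyperF1_def hypercycle2_def Let_def by auto

lemma huniform_hyperF1: "3 \<le> k \<Longrightarrow> huniform k (hyperF1 k n)"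
  unfolding huniform_def hyperF1_eq
  by (auto simp: finite_core_edge finite_pendant_edge card_core_edge card_pendant_edge)

lemma sum_hyperF1:
  assumes "3 \<le> k" and m: "m = n div (k-1)"
  shows "(\<Sum>e\<in>hyperF1 k n. g e) = g (core_edge k 1) + g (core_edge k 2)
          + (\<Sum>l=3..m. g (pendant_edge k (2,1) l))"
proof -
  let ?P = "pendant_edge k (2,1) ` {3..m}"
  have "(\<Sum>e\<in>?P. g e) = (\<Sum>l=3..m. g (pendant_edge k (2,1) l))"
    using \<open>3 \<le> k\<close> by (intro sum.reindex_cong[OF inj_on_pendant_edge]) auto
  moreover have "(\<Sum>e\<in>insert (core_edge k 2) ?P. g e) = g (core_edge k 2) + (\<Sum>e\<in>?P. g e)"
    by (rule sum_insert_separated[where w = "(0,0)"]) (auto simp: mem_core_edge mem_pendant_edge)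
  moreover have "(\<Sum>e\<in>hyperF1 k n. g e) = g (core_edge k 1) + (\<Sum>e\<in>insert (core_edge k 2) ?P. g e)"
    unfolding hyperF1_eq m[symmetric] using assms
    by (intro sum_insert_separated[where w = "(1,1)"]) (auto simp: mem_core_edge mem_pendant_edge)
  ultimately show ?thesis by (simp add: add.assoc)
qed

lemma hverts_hyperF1_cases:
  assumes "(a, b) \<in> hverts (hyperF1 k n)" and "m = n div (k-1)"
  obtains "a = 0" "b = 0 \<or> b = 1" | "a = 1" "1 \<le> b" "b \<le> k-2" | "a = 2" "b = 1"
    | "a = 2" "2 \<le> b" "b \<le> k-2" | "3 \<le> a" "a \<le> m" "1 \<le> b" "b \<le> k-1"
  using assms unfolding hverts_def hyperF1_eq
  by (auto simp: mem_core_edge mem_pendant_edge) (metis One_nat_def Suc_1 le_antisym not_less_eq_eq)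

text \<open>Positive vectors on F1 constant on the vertex classes {v1, v2}, inner vertices of e1, \<eta>,
  the other inner vertices of e2 and the pendant vertices, normalised to 1 on v1 and v2, which
  (k-1) A_F1 maps strictly below s times themselves; again d = k - 1 and t = m - 2 is the number
  of pendant edges at \<eta>.\<close>

definition F1_vector :: "real \<Rightarrow> real \<Rightarrow> real \<Rightarrow> real \<Rightarrow> nat \<times> nat \<Rightarrow> real" where
  "F1_vector c1 c2 h p v =
     (if fst v = 0 then 1 else if fst v = 1 then c1 else if v = (2,1) then h
      else if fst v = 2 then c2 else p)"

definition F1_class_inequalities ::
    "real \<Rightarrow> real \<Rightarrow> real \<Rightarrow> real \<Rightarrow> real \<Rightarrow> real \<Rightarrow> real \<Rightarrow> bool" where
  "F1_class_inequalities d t s c1 c2 h p \<longleftrightarrow>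
     0 < c1 \<and> 0 < c2 \<and> 0 < h \<and> 0 < p \<and>
     2 + (d-1)*c1 + (d-2)*c2 + h < s \<and>
     2 + (d-2)*c1 < s*c1 \<and>
     2 + (d-2)*c2 + t*d*p < s*h \<and>
     2 + h + (d-3)*c2 < s*c2 \<and>
     h + (d-1)*p < s*p"

lemma hyperF1_neighbour_sum:
  assumes "3 \<le> k" and m: "m = n div (k-1)" "3 \<le> m"
    and ineqs: "F1_class_inequalities (real k - 1) (real m - 2) s c1 c2 h p"
    and i: "(a, b) \<in> hverts (hyperF1 k n)"
  defines "y \<equiv> F1_vector c1 c2 h p"
  shows "(\<Sum>e\<in>hyperF1 k n. if (a, b) \<in> e then (\<Sum>j\<in>e. y j) - y (a, b) else 0) < s * y (a, b)"
proof -
  define d where "d = real k - 1"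
  define t where "t = real m - 2"
  have ineq: "2 + (d-1)*c1 + (d-2)*c2 + h < s" "2 + (d-2)*c1 < s*c1" "2 + (d-2)*c2 + t*d*p < s*h"
    "2 + h + (d-3)*c2 < s*c2" "h + (d-1)*p < s*p"
    using ineqs by (simp_all add: F1_class_inequalities_def d_def t_def)
  have core1: "(\<Sum>j\<in>core_edge k 1. y j) = 2 + (d-1)*c1"
    using \<open>3 \<le> k\<close> by (simp add: sum_core_edge y_def F1_vector_def d_def)
  have core2: "(\<Sum>j\<in>core_edge k 2. y j) = 2 + h + (d-2)*c2"
  proof -
    have "{1..k-2} = insert 1 {2..k-2}" using \<open>3 \<le> k\<close> by auto
    then have "(\<Sum>b=1..k-2. y (2,b)) = h + (\<Sum>b=2..k-2. c2)" by (simp add: y_def F1_vector_def)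
    then show ?thesis using \<open>3 \<le> k\<close> by (simp add: sum_core_edge y_def F1_vector_def d_def)
  qed
  have pend: "(\<Sum>j\<in>pendant_edge k v l. y j) = h + d*p" if "v = (2,1)" "3 \<le> l" for v l
    using that \<open>3 \<le> k\<close> by (simp add: sum_pendant_edge y_def F1_vector_def d_def)
  note edges = sum_hyperF1[OF \<open>3 \<le> k\<close> m(1)] sum_pendant_edges_containing[OF finite_atLeastAtMost]
  from hverts_hyperF1_cases[OF i m(1)] show ?thesis
  proof cases
    case 1
    then have "y (a, b) = 1" by (simp add: y_def F1_vector_def)
    with 1 show ?thesis using ineq(1) core1 core2
      by (auto simp add: edges mem_core_edge mem_pendant_edge algebra_simps)
  next
    case 2
    then have "y (a, b) = c1" by (simp add: y_def F1_vector_def)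
    with 2 show ?thesis using ineq(2) core1
      by (simp add: edges mem_core_edge mem_pendant_edge algebra_simps)
  next
    case 3
    then have "y (a, b) = h" by (simp add: y_def F1_vector_def)
    with 3 show ?thesis using ineq(3) m(2) \<open>3 \<le> k\<close>
      by (auto simp add: edges core2 pend mem_core_edge mem_pendant_edge t_def algebra_simps)
  next
    case 4
    then have "y (a, b) = c2" by (simp add: y_def F1_vector_def)
    with 4 show ?thesis using ineq(4)
      by (simp add: edges core2 mem_core_edge mem_pendant_edge algebra_simps)
  next
    case 5
    then have "y (a, b) = p" by (simp add: y_def F1_vector_def)
    with 5 show ?thesis using ineq(5)
      by (simp add: edges pend mem_core_edge mem_pendant_edge algebra_simps)
  qed
qed

lemma hyperF1_hspec_rad_less:
  assumes "3 \<le> k" and m: "m = n div (k-1)" "3 \<le> m"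
    and ineqs: "F1_class_inequalities (real k - 1) (real m - 2) s c1 c2 h p"
  shows "hspec_rad (hyperF1 k n) < s / (real k - 1)"
proof -
  let ?E = "hyperF1 k n"
  let ?y = "F1_vector c1 c2 h p"
  have unif: "huniform k ?E" using huniform_hyperF1[OF \<open>3 \<le> k\<close>] .
  have "(3,1) \<in> hverts ?E" "(3,2) \<in> hverts ?E"
    using assms(1,3) unfolding hverts_def hyperF1_eq m(1)[symmetric]
    by (auto simp: mem_pendant_edge intro!: bexI[of _ "pendant_edge k (2,1) 3"])
  \<comment> \<open>hspec_rad is a Sup, so bounding it from above needs some eigenvalue to exist.\<close>
  then have "heigenvalue ?E (- complex_of_real (hadj ?E (3,1) (3,2)))"
    using \<open>3 \<le> k\<close> finite_hverts[OF unif]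
    by (intro heigenvalue_twin_vertices) (auto simp: hyperF1_eq mem_core_edge mem_pendant_edge)
  moreover have "0 < ?y i" for i
    using ineqs by (simp add: F1_vector_def F1_class_inequalities_def)
  moreover have "(\<Sum>j\<in>hverts ?E. hadj ?E i j * ?y j) < s / (real k - 1) * ?y i"
    if "i \<in> hverts ?E" for i
  proof -
    obtain a b where "i = (a, b)" by fastforce
    moreover have "real k - 1 > 0" using \<open>3 \<le> k\<close> by simp
    ultimately show ?thesis
      using hyperF1_neighbour_sum[OF assms] that
      by (simp add: hadj_row_sum_uniform[OF unif] divide_strict_right_mono)
  qed
  ultimately show ?thesis
    using \<open>3 \<le> k\<close> by (intro hspec_rad_less_strict_supersolution[OF unif]) auto
qed

section \<open>Solving the class equations\<close>

text \<open>With s = A + d - 1 the class equations of F give xp = x1 / A, xq = x2 / A and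
  xc = (x1 + x2) / (A + 1); what remains is a 2x2 system in x1, x2 with determinant char_F.\<close>

definition char_F :: "real \<Rightarrow> real \<Rightarrow> real \<Rightarrow> real" where
  "char_F d t A = (A + d - 1 - (t-1)*d/A - 2*(d-1)/(A+1)) * (A + d - 1 - d/A - 2*(d-1)/(A+1))
                  - (2 + 2*(d-1)/(A+1))^2"

lemma F_class_equations_at_root:
  assumes "0 < A" and "1 \<le> d" and "char_F d t A = 0"
  shows "\<exists>x1 x2 xc xp xq. x1 \<noteq> 0 \<and> F_class_equations d t (A + d - 1) x1 x2 xc xp xq"
proof -
  define s where "s = A + d - 1"
  define P where "P = 2*(d-1)/(A+1)"
  define x1 where "x1 = 2 + P"
  define x2 where "x2 = s - (t-1)*d/A - P"
  have root: "x2 * (s - d/A - P) = x1^2"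
    using assms(3) unfolding char_F_def x1_def x2_def s_def P_def by simp
  have "0 \<le> P" using assms(1,2) by (simp add: P_def)
  then have "x1 \<noteq> 0" by (simp add: x1_def)
  moreover have "F_class_equations d t s x1 x2 ((x1 + x2)/(A+1)) (x1/A) (x2/A)"
    unfolding F_class_equations_def
  proof (intro conjI)
    have P: "2*(d-1)*((x1 + x2)/(A+1)) = P*(x1 + x2)" by (simp add: P_def)
    show "s*x1 = 2*x2 + 2*(d-1)*((x1 + x2)/(A+1)) + (t-1)*d*(x1/A)"
      unfolding P by (simp add: x1_def x2_def algebra_simps add_divide_distrib[symmetric])
    show "s*x2 = 2*x1 + 2*(d-1)*((x1 + x2)/(A+1)) + d*(x2/A)"
      using root unfolding P by (simp add: x1_def power2_eq_square algebra_simps)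
  qed (use \<open>0 < A\<close> in \<open>simp_all add: s_def field_simps\<close>)
  ultimately show ?thesis unfolding s_def by blast
qed

lemma char_F_pos_large:
  assumes "2 \<le> d" and "1 \<le> t"
  shows "0 < char_F d t (t*d + 3)"
proof -
  define A where "A = t*d + 3"
  define P where "P = 2*(d-1)/(A+1)"
  have "2 \<le> t*d" using mult_mono[of 1 t 2 d] assms by simp
  then have "5 \<le> A" by (simp add: A_def)
  have "0 \<le> P" using assms \<open>5 \<le> A\<close> by (simp add: P_def)
  have "2*P \<le> d - 1"
    using \<open>5 \<le> A\<close> assms mult_nonneg_nonneg[of "A-3" "d-1"] by (simp add: P_def field_simps algebra_simps)
  have "d \<le> t*d" using assms mult_right_mono[of 1 t d] by simp
  then have "d \<le> A" by (simp add: A_def)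
  have "(t-1)*d \<le> A" using assms(1) by (simp add: A_def algebra_simps)
  then have "(t-1)*d/A \<le> 1" "d/A \<le> 1" using \<open>d \<le> A\<close> \<open>5 \<le> A\<close> by simp_all
  then have "2 + P < A + d - 1 - (t-1)*d/A - P" "2 + P < A + d - 1 - d/A - P"
    using \<open>2*P \<le> d - 1\<close> \<open>5 \<le> A\<close> by linarith+
  then have "(2 + P)^2 < (A + d - 1 - (t-1)*d/A - P) * (A + d - 1 - d/A - P)"
    unfolding power2_eq_square using \<open>0 \<le> P\<close> by (intro mult_strict_mono) auto
  then show ?thesis unfolding char_F_def A_def[symmetric] P_def by simp
qed

text \<open>Numerators of the quantities in the construction, with s = A + d - 1, P = 2(d-1)/(A+1) and
  Q = (d-2)/(A+2): y_num = A(A+1)(s - P - d/A), k_num = (A+1)(A+2)(s - 2 - P - 2Q),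
  char_num = A(A+1)^2 char_F d 1 A; at a root of char_F, g_num and phi_num are the numerators of
  G = s - Q - t d/A and of G (s - 2 - P - 2Q) - (2 + 2Q)(1 + Q).\<close>

definition y_num :: "real \<Rightarrow> real \<Rightarrow> real" where
  "y_num d A = (A+d-1)*A*(A+1) - d*(A+1) - 2*(d-1)*A"

definition k_num :: "real \<Rightarrow> real \<Rightarrow> real" where
  "k_num d A = (A+d-3)*(A+1)*(A+2) - 2*(d-1)*(A+2) - 2*(d-2)*(A+1)"

definition g_num :: "real \<Rightarrow> real \<Rightarrow> real" where
  "g_num d A = 4*(A+d)^2*A^2*(A+2)
     + y_num d A * (2*(d-1)*A*(A+2) - d*(A+1)*(A+2) - (d-2)*A*(A+1))"

definition phi_num :: "real \<Rightarrow> real \<Rightarrow> real" where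
  "phi_num d A = g_num d A * k_num d A - 2*A*(A+1)^2*(A+d)^2*y_num d A"

definition char_num :: "real \<Rightarrow> real \<Rightarrow> real" where
  "char_num d A = ((A+d-1)*(A+1) - 2*(d-1))*y_num d A - 4*A*(A+d)^2"

definition root_lower_bound :: "real \<Rightarrow> real" where
  "root_lower_bound d = (if d = 2 then 5/2 else 27/10)"

text \<open>Positivity certificates: after the shift A = A0 + u, d = 3 + e all coefficients are
  nonnegative.\<close>

lemma nums_pos:
  assumes "d = 2 \<or> 3 \<le> d" and "root_lower_bound d \<le> A"
  shows "0 < y_num d A" "0 < k_num d A" "0 < phi_num d A"
proof -
  consider "d = 2" "5/2 \<le> A" | "3 \<le> d" "27/10 \<le> A"
    using assms by (auto simp: root_lower_bound_def split: if_splits)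
  then have "0 < y_num d A \<and> 0 < k_num d A \<and> 0 < phi_num d A"
  proof cases
    case 1
    define u where "u = A - 5/2"
    have "0 \<le> u" and A: "A = 5/2 + u" using 1 by (simp_all add: u_def)
    have "y_num 2 (5/2+u) = 149/8 + 103/4*u + 19/2*u^2 + u^3"
      "k_num 2 (5/2+u) = 117/8 + 103/4*u + 19/2*u^2 + u^3"
      "phi_num 2 (5/2+u) = 993951/128 + 1108197/32*u + 798545/16*u^2 + 290769/8*u^3 + 15420*u^4
         + 7983/2*u^5 + 623*u^6 + 54*u^7 + 2*u^8"
      unfolding phi_num_def g_num_def y_num_def k_num_def by algebra+
    with \<open>0 \<le> u\<close> show ?thesis unfolding A \<open>d = 2\<close>
      by (simp only:) (intro conjI add_pos_nonneg mult_nonneg_nonneg zero_le_power; simp)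
  next
    case 2
    define u where "u = A - 27/10"
    define e where "e = d - 3"
    have "0 \<le> u" "0 \<le> e" and A: "A = 27/10 + u" "d = 3 + e" using 2 by (simp_all add: u_def e_def)
    have "y_num (3+e) (27/10+u) = 25053/1000 + 89/100*e + 3307/100*u + 17/5*u*e + 111/10*u^2
        + u^2*e + u^3"
      "k_num (3+e) (27/10+u) = 20753/1000 + 59/100*e + 3407/100*u + 22/5*u*e + 111/10*u^2
        + u^2*e + u^3"
      "phi_num (3+e) (27/10+u) = 1315426342581/50000000 + 51906786699/5000000*e
        + 545720807/500000*e^2 + 700817/50000*e^3 + 122868501831/1250000*u
        + 22704823089/500000*u*e + 173868963/25000*u*e^2 + 71401/200*u*e^3
        + 7636357049/62500*u^2 + 2696414291/50000*u^2*e + 7880889/1000*u^2*e^2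
        + 19107/50*u^2*e^3 + 963576073/12500*u^3 + 30424781/1000*u^3*e + 96939/25*u^3*e^2
        + 787/5*u^3*e^3 + 14156837/500*u^4 + 945413/100*u^4*e + 9701/10*u^4*e^2 + 29*u^4*e^3
        + 791137/125*u^5 + 83147/50*u^5*e + 606/5*u^5*e^2 + 2*u^5*e^3 + 21256/25*u^6
        + 777/5*u^6*e + 6*u^6*e^2 + 316/5*u^7 + 6*u^7*e + 2*u^8"
      unfolding phi_num_def g_num_def y_num_def k_num_def by algebra+
    with \<open>0 \<le> u\<close> \<open>0 \<le> e\<close> show ?thesis unfolding A
      by (simp only:) (intro conjI add_pos_nonneg mult_nonneg_nonneg zero_le_power; simp)
  qed
  then show "0 < y_num d A" "0 < k_num d A" "0 < phi_num d A" by simp_all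
qed

lemma char_num_neg:
  assumes "d = 2 \<or> 3 \<le> d"
  shows "char_num d (root_lower_bound d) < 0"
  using assms
proof
  assume "d = 2"
  then show ?thesis by (simp add: char_num_def y_num_def root_lower_bound_def power2_eq_square)
next
  assume "3 \<le> d"
  define e where "e = d - 3"
  have "0 \<le> e" and d: "d = 3 + e" using \<open>3 \<le> d\<close> by (simp_all add: e_def)
  have "char_num (3+e) (27/10) = - 1543233/100000 - 42883/625*e - 9287/1000*e^2"
    unfolding char_num_def y_num_def by algebra
  also have "\<dots> < 0" using \<open>0 \<le> e\<close> zero_le_power2[of e] by linarith
  finally show ?thesis using \<open>0 \<le> e\<close> unfolding d root_lower_bound_def by simp
qed

lemma char_F_eq:
  assumes "0 < A"
  shows "char_F d t A = char_num d A / (A*(A+1)^2) - (t-1)*(d/A)*(y_num d A/(A*(A+1)))"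
proof -
  have "A \<noteq> 0" "A + 1 \<noteq> 0" using assms by simp_all
  then show ?thesis unfolding char_F_def char_num_def y_num_def
    by (simp add: divide_simps power2_eq_square) algebra
qed

lemma g_num_eq:
  assumes "0 < A"
  shows "(A + d - 1 - (d-2)/(A+2) - t*d/A) * (A*(A+1)*(A+2)*y_num d A)
         = g_num d A + A^2*(A+1)^2*(A+2) * char_F d t A"
proof -
  have "A \<noteq> 0" "A + 1 \<noteq> 0" "A + 2 \<noteq> 0" using assms by simp_all
  then show ?thesis unfolding char_F_def g_num_def y_num_def
    by (simp add: divide_simps power2_eq_square) algebra
qed

lemma char_F_root_exists:
  assumes "d = 2 \<or> 3 \<le> d" and "1 \<le> t"
  shows "\<exists>A. root_lower_bound d \<le> A \<and> char_F d t A = 0"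
proof -
  define A0 where "A0 = root_lower_bound d"
  have "0 < A0" by (simp add: A0_def root_lower_bound_def)
  have "2 \<le> d" using assms(1) by auto
  have "char_F d t A0 < 0"
  proof -
    have "0 < y_num d A0" using nums_pos(1)[OF assms(1)] by (simp add: A0_def)
    then have "0 \<le> (t-1)*(d/A0)*(y_num d A0/(A0*(A0+1)))"
      using assms(2) \<open>2 \<le> d\<close> \<open>0 < A0\<close> by simp
    moreover have "char_num d A0 / (A0*(A0+1)^2) < 0"
      using char_num_neg[OF assms(1)] \<open>0 < A0\<close> by (simp add: A0_def divide_neg_pos)
    ultimately show ?thesis using char_F_eq[OF \<open>0 < A0\<close>, of d t] by linarith
  qed
  moreover have "0 < char_F d t (t*d + 3)" using char_F_pos_large \<open>2 \<le> d\<close> assms(2) by blast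
  moreover have "A0 \<le> t*d + 3"
    using \<open>2 \<le> d\<close> assms(2) by (simp add: A0_def root_lower_bound_def)
  moreover have "continuous_on {A0..t*d + 3} (char_F d t)"
    unfolding char_F_def using \<open>0 < A0\<close> by (intro continuous_intros) auto
  ultimately show ?thesis
    using IVT'[of "char_F d t" A0 0 "t*d + 3"] unfolding A0_def by fastforce
qed

lemma F1_class_inequalities_of_slack:
  fixes A d t h r :: real
  assumes "0 < A" and "0 < h" and "0 < r"
  defines "s \<equiv> A + d - 1" and "P \<equiv> 2*(d-1)/(A+1)" and "Q \<equiv> (d-2)/(A+2)"
  assumes slack_v: "h*(1 + Q) + r*((d-1)/(A+1) + Q) < s - 2 - P - 2*Q"
    and slack_\<eta>: "2 + 2*Q + r*(Q + t*d/A) < h*(s - Q - t*d/A)"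
  shows "F1_class_inequalities d t s ((2 + r)/(A+1)) ((2 + h + r)/(A+2)) h ((h + r)/A)"
proof -
  define c1 where "c1 = (2 + r)/(A+1)"
  define c2 where "c2 = (2 + h + r)/(A+2)"
  define p where "p = (h + r)/A"
  have "c1 * (A+1) = 2 + r" "c2 * (A+2) = 2 + h + r" "p * A = h + r"
    using \<open>0 < A\<close> by (simp_all add: c1_def c2_def p_def)
  moreover have "s*c1 - (d-2)*c1 = c1*(A+1)" "s*c2 - (d-3)*c2 = c2*(A+2)" "s*p - (d-1)*p = p*A"
    by (simp_all add: s_def algebra_simps)
  moreover have "2 + (d-1)*c1 + (d-2)*c2 + h = 2 + P + 2*Q + h*(1 + Q) + r*((d-1)/(A+1) + Q)"
    and "2 + (d-2)*c2 + t*d*p = 2 + 2*Q + r*(Q + t*d/A) + h*(Q + t*d/A)"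
    by (simp_all add: c1_def c2_def p_def P_def Q_def algebra_simps add_divide_distrib)
  ultimately show ?thesis
    unfolding F1_class_inequalities_def c1_def[symmetric] c2_def[symmetric] p_def[symmetric]
    using slack_v slack_\<eta> \<open>0 < A\<close> \<open>0 < h\<close> \<open>0 < r\<close>
    by (auto simp: c1_def c2_def p_def algebra_simps)
qed

lemma F1_class_inequalities_of_gap:
  fixes A d t :: real
  assumes "0 < A" and "2 \<le> d" and "1 \<le> t"
  defines "s \<equiv> A + d - 1" and "P \<equiv> 2*(d-1)/(A+1)" and "Q \<equiv> (d-2)/(A+2)"
  defines "K \<equiv> s - 2 - P - 2*Q" and "G \<equiv> s - Q - t*d/A"
  assumes "0 < K" and gap: "(2 + 2*Q) * (1 + Q) < G * K"
  shows "\<exists>c1 c2 h p. F1_class_inequalities d t s c1 c2 h p"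
proof -
  have "0 \<le> Q" using assms(1,2) by (simp add: Q_def)
  then have "0 < G" using gap \<open>0 < K\<close> by (smt (verit) mult_nonpos_nonneg zero_less_mult_iff)
  \<comment> \<open>Choose h strictly between (2+2Q)/G and K/(1+Q), then a small enough slack r.\<close>
  define lo where "lo = (2 + 2*Q) / G"
  define hi where "hi = K / (1 + Q)"
  have "lo < hi" using gap \<open>0 < G\<close> \<open>0 \<le> Q\<close> by (simp add: lo_def hi_def field_simps)
  define h where "h = (lo + hi) / 2"
  have "lo < h" "h < hi" using \<open>lo < hi\<close> by (simp_all add: h_def)
  then have hG: "2 + 2*Q < h*G" and hL: "h*(1 + Q) < K"
    using \<open>0 < G\<close> \<open>0 \<le> Q\<close> by (simp_all add: lo_def hi_def divide_less_eq less_divide_eq)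
  have "0 < h" using hG \<open>0 < G\<close> \<open>0 \<le> Q\<close> by (smt (verit) mult_nonpos_nonneg)
  define \<alpha> where "\<alpha> = (d-1)/(A+1) + Q"
  define \<beta> where "\<beta> = Q + t*d/A"
  have "0 \<le> \<alpha>" "0 \<le> \<beta>" using assms(1-3) \<open>0 \<le> Q\<close> by (simp_all add: \<alpha>_def \<beta>_def)
  define r where "r = min ((K - h*(1 + Q)) / (\<alpha> + 1)) ((h*G - (2 + 2*Q)) / (\<beta> + 1))"
  have "0 < r" using hG hL \<open>0 \<le> \<alpha>\<close> \<open>0 \<le> \<beta>\<close> by (simp add: r_def)
  have "r * (\<alpha> + 1) \<le> K - h*(1 + Q)" "r * (\<beta> + 1) \<le> h*G - (2 + 2*Q)"
    using \<open>0 \<le> \<alpha>\<close> \<open>0 \<le> \<beta>\<close> by (simp_all add: r_def min_le_iff_disj pos_le_divide_eq[symmetric])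
  then have "h*(1 + Q) + r*\<alpha> < K" "2 + 2*Q + r*\<beta> < h*G"
    using \<open>0 < r\<close> by (simp_all add: algebra_simps)
  then show ?thesis
    using F1_class_inequalities_of_slack[OF \<open>0 < A\<close> \<open>0 < h\<close> \<open>0 < r\<close>, of d t]
    unfolding s_def P_def Q_def K_def G_def \<alpha>_def \<beta>_def by (auto simp: algebra_simps)
qed

lemma F1_class_inequalities_at_root:
  assumes "d = 2 \<or> 3 \<le> d" and "1 \<le> t" and "root_lower_bound d \<le> A" and "char_F d t A = 0"
  shows "\<exists>c1 c2 h p. F1_class_inequalities d t (A + d - 1) c1 c2 h p"
proof -
  have "0 < A" using assms(3) by (simp add: root_lower_bound_def split: if_splits)
  have "2 \<le> d" using assms(1) by auto
  have y: "0 < y_num d A" and k: "0 < k_num d A" and phi: "0 < phi_num d A"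
    using nums_pos[OF assms(1,3)] by simp_all
  define Q where "Q = (d-2)/(A+2)"
  define K where "K = A + d - 1 - 2 - 2*(d-1)/(A+1) - 2*Q"
  define G where "G = A + d - 1 - Q - t*d/A"
  have "A + 1 \<noteq> 0" "A + 2 \<noteq> 0" using \<open>0 < A\<close> by simp_all
  then have K_eq: "K * ((A+1)*(A+2)) = k_num d A"
    unfolding K_def Q_def k_num_def by (simp add: divide_simps) algebra
  have G_eq: "G * (A*(A+1)*(A+2)*y_num d A) = g_num d A"
    using g_num_eq[OF \<open>0 < A\<close>, of d t] assms(4) by (simp add: G_def Q_def)
  have Q_eq: "(1 + Q) * (A+2) = A + d" using \<open>0 < A\<close> by (simp add: Q_def field_simps)
  define D where "D = A*(A+1)^2*(A+2)^2*y_num d A"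
  have "(G*K - (2 + 2*Q)*(1 + Q)) * D
      = (G * (A*(A+1)*(A+2)*y_num d A)) * (K * ((A+1)*(A+2)))
        - 2*A*(A+1)^2*((1 + Q)*(A+2))^2*y_num d A"
    by (simp add: D_def power2_eq_square algebra_simps)
  also have "\<dots> = phi_num d A" unfolding G_eq K_eq Q_eq phi_num_def ..
  finally have "0 < (G*K - (2 + 2*Q)*(1 + Q)) * D" using phi by simp
  moreover have "0 < D" using \<open>0 < A\<close> y by (simp add: D_def)
  ultimately have gap: "(2 + 2*Q)*(1 + Q) < G*K" by (simp add: zero_less_mult_iff)
  have "0 < K * ((A+1)*(A+2))" using K_eq k by simp
  moreover have "0 < (A+1)*(A+2)" using \<open>0 < A\<close> by simp
  ultimately have "0 < K" by (rule zero_less_mult_pos2)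
  with gap show ?thesis
    using F1_class_inequalities_of_gap[OF \<open>0 < A\<close> \<open>2 \<le> d\<close> assms(2)]
    unfolding K_def G_def Q_def by (simp add: algebra_simps)
qed

lemma class_solutions_exist:
  assumes "d = 2 \<or> 3 \<le> d" and "1 \<le> t"
  shows "\<exists>s x1 x2 xc xp xq c1 c2 h p. x1 \<noteq> 0 \<and> F_class_equations d t s x1 x2 xc xp xq
           \<and> F1_class_inequalities d t s c1 c2 h p"
proof -
  obtain A where A: "root_lower_bound d \<le> A" "char_F d t A = 0"
    using char_F_root_exists[OF assms] by blast
  moreover have "0 < A" "1 \<le> d"
    using assms(1) A(1) by (auto simp: root_lower_bound_def split: if_splits)
  ultimately obtain x1 x2 xc xp xq c1 c2 h p where "x1 \<noteq> 0"
    and "F_class_equations d t (A + d - 1) x1 x2 xc xp xq"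
    and "F1_class_inequalities d t (A + d - 1) c1 c2 h p"
    using F_class_equations_at_root[of A d t] F1_class_inequalities_at_root[OF assms] by blast
  then show ?thesis by blast
qed

theorem lemma3p7:
  fixes k n :: nat
  assumes "k \<ge> 3" and "(k - 1) dvd n" and "n div (k - 1) \<ge> 3"
  shows "hspec_rad (hyperF1 k n) < hspec_rad (hyperF k n)"
proof -
  \<comment> \<open>The divisibility hypothesis only makes n the order of F and F1; the proof needs m alone.\<close>
  define m where "m = n div (k - 1)"
  have "3 \<le> m" using assms(3) unfolding m_def .
  have "real k - 1 = 2 \<or> 3 \<le> real k - 1" using \<open>k \<ge> 3\<close> by (cases "k = 3") auto
  moreover have "1 \<le> real m - 2" using \<open>3 \<le> m\<close> by simp
  ultimately obtain s x1 x2 xc xp xq c1 c2 h p where "x1 \<noteq> 0"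
    and F: "F_class_equations (real k - 1) (real m - 2) s x1 x2 xc xp xq"
    and F1: "F1_class_inequalities (real k - 1) (real m - 2) s c1 c2 h p"
    by (metis class_solutions_exist)
  have "hspec_rad (hyperF1 k n) < s / (real k - 1)"
    using hyperF1_hspec_rad_less[OF \<open>k \<ge> 3\<close> m_def \<open>3 \<le> m\<close> F1] .
  also have "\<dots> \<le> cmod (complex_of_real (s / (real k - 1)))" unfolding norm_of_real by (rule abs_ge_self)
  also have "\<dots> \<le> hspec_rad (hyperF k n)"
    using huniform_hyperF[OF \<open>k \<ge> 3\<close> assms(3)] _
      hyperF_heigenvalue[OF \<open>k \<ge> 3\<close> m_def \<open>3 \<le> m\<close> F \<open>x1 \<noteq> 0\<close>]
    by (rule cmod_eigenvalue_le_hspec_rad) (use \<open>k \<ge> 3\<close> in simp)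
  finally show ?thesis .
qed

end
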